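(* Let $n\ge 2$, $N=2^n$, $s=(N-1)/2$. Consider the restricted close Hadamard problem: given oracle access (via $\hat U_z$) to a string $z\in\tilde C=\tilde A\cup\tilde B$, where $\tilde A=\tilde\Xi^{(N)}_{N/2-1}$ and $\tilde B=\bigcup_{k=0}^{N/2-2}\tilde\Xi^{(N)}_k$, decide whether $z\in\tilde A$ or $z\in\tilde B$. There is a quantum algorithm that solves this problem with certainty (for every $z\in\tilde C$) using a single query to $\hat U_z$: it prepares the state $\tfrac1{\sqrt2}(|\tfrac12\rangle_s+|-\tfrac12\rangle_s)$, applies $\hat H^{\otimes n}$, then $\hat U_z$, then $\hat H^{\otimes n}$, then a fixed unitary not depending on $z$, and then measures in the spin basis.
   Context: Work in $\mathbb{C}^N$ with computational basis $\{|y\rangle : y=0,\dots,N-1\}$; spin basis states $|m\rangle_s$, $m\in\{-s,\dots,s\}$, are identified via $|m\rangle_s=|m+s\rangle$. For $x,y\in\{0,\dots,N-1\}$, $x\cdot y\in\{0,1\}$ is the mod-2 inner product of their $n$-bit binary expansions; $\hat H^{\otimes n}|y\rangle=N^{-1/2}\sum_x(-1)^{x\cdot y}|x\rangle$. The Hadamard codeword $W^{(N)}_j\in\{0,1\}^N$ has bit $x\cdot j$ at position $x$. For $z\in\{0,1\}^N$ the oracle is the diagonal unitary $\hat U_z|x\rangle=(-1)^{z_x}|x\rangle$; a query is one application of $\hat U_z$. For $a,b\in\{0,1\}^N$, $a\preccurlyeq b$ means $a_x=1\Rightarrow b_x=1$. The set $\tilde\Xi^{(N)}_j$ consists of all strings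 $W^{(N)}_j\oplus e$ with $e\preccurlyeq W^{(N)}_{N-1}$ and Hamming weight $|e|<N/4$ ($\oplus$ is bitwise XOR). *)

theory Defs
  imports Complex_Main
begin

(* Vectors in C^N are functions nat => complex (only indices < N matter);
  N x N matrices are functions nat => nat => complex (only indices < N matter).
  Bit strings z in {0,1}^N are represented by their support, a subset of {..<N}. *)

definition dimN :: "nat \<Rightarrow> nat" where
  "dimN n = 2 ^ n"

definition bdot :: "nat \<Rightarrow> nat \<Rightarrow> nat \<Rightarrow> nat" where
  "bdot n x y = (\<Sum>i<n. if bit x i \<and> bit y i then 1 else 0) mod 2"

definition ket :: "nat \<Rightarrow> nat \<Rightarrow> complex" where
  "ket k = (\<lambda>x. if x = k then 1 else 0)"

definition spin_ket :: "nat \<Rightarrow> real \<Rightarrow> nat \<Rightarrow> complex" where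
  "spin_ket n m = ket (nat \<lfloor>m + (real (dimN n) - 1) / 2\<rfloor>)"

definition hadamard :: "nat \<Rightarrow> (nat \<Rightarrow> complex) \<Rightarrow> nat \<Rightarrow> complex" where
  "hadamard n \<psi> = (\<lambda>x. if x < dimN n then
      (1 / complex_of_real (sqrt (real (dimN n)))) *
        (\<Sum>y<dimN n. (-1) ^ bdot n x y * \<psi> y)
    else 0)"

definition query_op :: "nat set \<Rightarrow> (nat \<Rightarrow> complex) \<Rightarrow> nat \<Rightarrow> complex" where
  "query_op z \<psi> = (\<lambda>x. if x \<in> z then - \<psi> x else \<psi> x)"

definition mat_app :: "nat \<Rightarrow> (nat \<Rightarrow> nat \<Rightarrow> complex) \<Rightarrow> (nat \<Rightarrow> complex) \<Rightarrow> nat \<Rightarrow> complex" where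
  "mat_app N V \<psi> = (\<lambda>i. if i < N then (\<Sum>j<N. V i j * \<psi> j) else 0)"

definition unitary_mat :: "nat \<Rightarrow> (nat \<Rightarrow> nat \<Rightarrow> complex) \<Rightarrow> bool" where
  "unitary_mat N V \<longleftrightarrow>
     (\<forall>i<N. \<forall>j<N. (\<Sum>k<N. cnj (V k i) * V k j) = (if i = j then 1 else 0))"

definition codeword :: "nat \<Rightarrow> nat \<Rightarrow> nat set" where
  "codeword n j = {x. x < dimN n \<and> bdot n x j = 1}"

definition Xi_tilde :: "nat \<Rightarrow> nat \<Rightarrow> nat set set" where
  "Xi_tilde n j = {(codeword n j - e) \<union> (e - codeword n j) | e.
       e \<subseteq> codeword n (dimN n - 1) \<and> 4 * card e < dimN n}"

definition A_tilde :: "nat \<Rightarrow> nat set set" where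
  "A_tilde n = Xi_tilde n (dimN n div 2 - 1)"

definition B_tilde :: "nat \<Rightarrow> nat set set" where
  "B_tilde n = (\<Union>k\<in>{0..dimN n div 2 - 2}. Xi_tilde n k)"

definition init_state :: "nat \<Rightarrow> nat \<Rightarrow> complex" where
  "init_state n = (\<lambda>x. (1 / complex_of_real (sqrt 2)) *
       (spin_ket n (1/2) x + spin_ket n (-1/2) x))"

definition final_state :: "nat \<Rightarrow> (nat \<Rightarrow> nat \<Rightarrow> complex) \<Rightarrow> nat set \<Rightarrow> nat \<Rightarrow> complex" where
  "final_state n V z = mat_app (dimN n) V (hadamard n (query_op z (hadamard n (init_state n))))"

end

theory Submission
  imports Defs
begin

text \<open>
  With \<open>a = N/2 - 1\<close> and \<open>b = N/2\<close>, the first Hadamard layer turns the initial state into the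
  amplitudes \<open>((-1)^(x\<cdot>a) + (-1)^(x\<cdot>b)) / \<surd>(2N)\<close>. Since \<open>a \<oplus> b = N - 1\<close>, these vanish exactly
  on the support of \<open>W_(N-1)\<close>, so an error \<open>e \<preccurlyeq> W_(N-1)\<close> is invisible to the query, which
  therefore acts as multiplication by the character \<open>(-1)^(x\<cdot>j)\<close>. The second Hadamard layer
  then yields \<open>(|j \<oplus> a\<rangle> + |j \<oplus> b\<rangle>) / \<surd>2\<close>. For \<open>j = a\<close> this is supported on \<open>{0, N - 1}\<close>,
  and for \<open>j \<notin> {a, b}\<close> it avoids both, so measuring directly (the fixed unitary is the
  identity) decides the problem with certainty.
\<close>

lemma xor_eq_0_iff_nat: "xor (x::nat) y = 0 \<longleftrightarrow> x = y"
  by (metis xor.assoc xor.left_neutral xor_self_eq xor.commute)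

lemma xor_left_cancel_nat: "xor (x::nat) y = xor x z \<longleftrightarrow> y = z"
  by (metis xor.assoc xor.left_neutral xor_self_eq)

lemma xor_less_two_power: "(x::nat) < 2 ^ n \<Longrightarrow> y < 2 ^ n \<Longrightarrow> xor x y < 2 ^ n"
  by (metis take_bit_nat_eq_self_iff take_bit_xor)

lemma eq_0_if_low_bits_zero:
  assumes "(y::nat) < 2 ^ n" and "\<forall>i<n. \<not> bit y i"
  shows "y = 0"
proof -
  have "take_bit n y = 0"
    using assms(2) by (intro bit_eqI) (simp add: bit_take_bit_iff)
  with assms(1) show ?thesis by (simp add: take_bit_nat_eq_self)
qed

lemma xor_mask_exp: "xor (mask m) (2 ^ m :: nat) = mask (Suc m)"
  by (rule bit_eqI) (auto simp: bit_xor_iff bit_mask_iff bit_exp_iff)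

lemma sum_two_power_prod_bits:
  "(\<Sum>x<(2::nat) ^ n. \<Prod>i<n. if bit x i then c i else 1) = (\<Prod>i<n. 1 + (c i :: 'a :: comm_semiring_1))"
proof (induction n arbitrary: c)
  case 0
  then show ?case by simp
next
  case (Suc n)
  let ?P = "\<lambda>x. \<Prod>i<n. if bit x i then c (Suc i) else 1"
  have split_even_odd: "(\<Sum>x<2 * M. f x) = (\<Sum>x<M. f (2 * x) + f (2 * x + 1))"
    for M :: nat and f :: "nat \<Rightarrow> 'a"
    by (induction M) (auto simp: add_ac)
  have low_bit: "(\<Prod>i<Suc n. if bit x i then c i else 1) = (if odd x then c 0 else 1) * ?P (x div 2)"
    for x :: nat
    unfolding prod.lessThan_Suc_shift by (simp add: bit_Suc bit_0)
  have "(\<Sum>x<(2::nat) ^ Suc n. \<Prod>i<Suc n. if bit x i then c i else 1)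
      = (\<Sum>x<(2::nat) ^ n. ?P x + c 0 * ?P x)"
    unfolding power_Suc split_even_odd low_bit by simp
  also have "\<dots> = (1 + c 0) * (\<Sum>x<(2::nat) ^ n. ?P x)"
    by (simp add: sum.distrib sum_distrib_left algebra_simps)
  also have "\<dots> = (\<Prod>i<Suc n. 1 + c i)"
    unfolding Suc.IH prod.lessThan_Suc_shift by simp
  finally show ?case .
qed

definition walsh :: "nat \<Rightarrow> nat \<Rightarrow> nat \<Rightarrow> complex" where
  "walsh n x y = (-1) ^ bdot n x y"

lemma walsh_eq_prod: "walsh n x y = (\<Prod>i<n. if bit x i \<and> bit y i then -1 else 1)"
proof -
  have "walsh n x y = (-1) ^ (\<Sum>i<n. if bit x i \<and> bit y i then 1 else 0)"
    unfolding walsh_def bdot_def by (simp add: minus_one_power_iff)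
  also have "\<dots> = (\<Prod>i<n. (-1) ^ (if bit x i \<and> bit y i then 1 else 0))"
    by (rule power_sum)
  also have "\<dots> = (\<Prod>i<n. if bit x i \<and> bit y i then -1 else 1)"
    by (intro prod.cong) auto
  finally show ?thesis .
qed

lemma walsh_commute: "walsh n x y = walsh n y x"
  unfolding walsh_def bdot_def by (simp add: conj_commute)

lemma walsh_mult: "walsh n x y * walsh n x y' = walsh n x (xor y y')"
  unfolding walsh_eq_prod prod.distrib[symmetric] by (rule prod.cong) (auto simp: bit_xor_iff)

lemma walsh_eq_if: "walsh n x y = (if bdot n x y = 1 then -1 else 1)"
proof -
  have "bdot n x y < 2" unfolding bdot_def by simp
  then show ?thesis unfolding walsh_def by (cases "bdot n x y") auto
qed

lemma walsh_mult_self: "walsh n x y * walsh n x y = 1"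
  unfolding walsh_mult by (simp add: walsh_eq_prod)

lemma sum_walsh:
  assumes "y < 2 ^ n"
  shows "(\<Sum>x<(2::nat) ^ n. walsh n x y) = (if y = 0 then 2 ^ n else 0)"
proof -
  have "(\<Sum>x<(2::nat) ^ n. walsh n x y)
      = (\<Sum>x<(2::nat) ^ n. \<Prod>i<n. if bit x i then (if bit y i then -1 else 1) else 1)"
    unfolding walsh_eq_prod by (intro sum.cong prod.cong) auto
  also have "\<dots> = (\<Prod>i<n. if bit y i then 0 else 2 :: complex)"
    unfolding sum_two_power_prod_bits by (intro prod.cong) auto
  also have "\<dots> = (if y = 0 then 2 ^ n else 0)"
    using eq_0_if_low_bits_zero[OF assms] by auto
  finally show ?thesis .
qed

lemma hadamard_cong: "(\<And>x. x < dimN n \<Longrightarrow> \<psi> x = \<phi> x) \<Longrightarrow> hadamard n \<psi> = hadamard n \<phi>"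
  unfolding hadamard_def by (intro ext) simp

lemma hadamard_eq_walsh:
  "hadamard n \<psi> y = (if y < dimN n
     then (\<Sum>x<dimN n. walsh n y x * \<psi> x) / complex_of_real (sqrt (real (dimN n))) else 0)"
  unfolding hadamard_def walsh_def by simp

lemma hadamard_scale_add:
  "hadamard n (\<lambda>x. c * (\<phi> x + \<psi> x)) y = c * (hadamard n \<phi> y + hadamard n \<psi> y)"
  unfolding hadamard_eq_walsh by (simp add: sum.distrib sum_distrib_left algebra_simps add_divide_distrib)

lemma hadamard_ket:
  assumes "k < dimN n"
  shows "hadamard n (ket k) y =
    (if y < dimN n then walsh n y k / complex_of_real (sqrt (real (dimN n))) else 0)"
proof -
  have "(\<Sum>x<dimN n. walsh n y x * ket k x) = walsh n y k"
    using assms by (simp add: ket_def if_distrib[of "\<lambda>t. _ * t"] cong: if_cong)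
  then show ?thesis unfolding hadamard_eq_walsh by simp
qed

lemma sqrt_dimN_squared: "complex_of_real (sqrt (real (dimN n))) ^ 2 = of_nat (dimN n)"
  by (simp flip: of_real_power)

lemma hadamard_walsh:
  assumes "c < dimN n"
  shows "hadamard n (walsh n c) y =
    (if y < dimN n then complex_of_real (sqrt (real (dimN n))) * of_bool (y = c) else 0)"
proof (cases "y < dimN n")
  case True
  let ?r = "complex_of_real (sqrt (real (dimN n)))"
  have "(\<Sum>x<dimN n. walsh n y x * walsh n c x) = (\<Sum>x<dimN n. walsh n x (xor y c))"
    by (simp add: walsh_commute walsh_mult)
  also have "\<dots> = (if xor y c = 0 then of_nat (dimN n) else 0)"
    using sum_walsh[OF xor_less_two_power] True assms unfolding dimN_def by simp
  also have "\<dots> = of_bool (y = c) * ?r ^ 2"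
    by (simp add: xor_eq_0_iff_nat sqrt_dimN_squared)
  finally show ?thesis
    using True unfolding hadamard_eq_walsh by (simp add: power2_eq_square)
qed (simp add: hadamard_eq_walsh)

lemma query_op_symdiff_invisible:
  assumes "\<And>x. x \<in> e \<Longrightarrow> \<psi> x = 0"
  shows "query_op ((W - e) \<union> (e - W)) \<psi> = query_op W \<psi>"
  unfolding query_op_def using assms by (intro ext) auto

lemma query_op_codeword:
  "x < dimN n \<Longrightarrow> query_op (codeword n j) \<psi> x = walsh n x j * \<psi> x"
  unfolding query_op_def codeword_def walsh_eq_if by auto

lemma unitary_mat_id: "unitary_mat N (\<lambda>i j. of_bool (i = j))"
  unfolding unitary_mat_def by (auto simp: of_bool_def if_distrib[of "\<lambda>t. _ * t"] cong: if_cong)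

lemma mat_app_id: "mat_app N (\<lambda>i j. of_bool (i = j)) \<psi> m = (if m < N then \<psi> m else 0)"
  unfolding mat_app_def by (simp add: of_bool_def if_distrib[of "\<lambda>t. t * _"] cong: if_cong)

lemma
  assumes "n \<ge> 1"
  shows dimN_half: "dimN n div 2 = 2 ^ (n - 1)"
    and xor_dimN_half: "xor (dimN n div 2 - 1) (dimN n div 2) = dimN n - 1"
proof -
  have n: "n = Suc (n - 1)" using assms by simp
  show half: "dimN n div 2 = 2 ^ (n - 1)"
    unfolding dimN_def by (subst n) simp
  have "xor (2 ^ (n - 1) - 1) (2 ^ (n - 1)) = (2::nat) ^ n - 1"
    using xor_mask_exp[of "n - 1"] by (subst (3) n) (simp add: mask_eq_exp_minus_1)
  then show "xor (dimN n div 2 - 1) (dimN n div 2) = dimN n - 1"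
    unfolding half unfolding dimN_def .
qed

lemma spin_ket_half:
  assumes "n \<ge> 1"
  shows "spin_ket n (1/2) = ket (dimN n div 2)"
    and "spin_ket n (-1/2) = ket (dimN n div 2 - 1)"
proof -
  have "1 \<le> dimN n div 2" unfolding dimN_half[OF assms] by simp
  moreover have "dimN n = 2 * (dimN n div 2)"
    using assms unfolding dimN_def by (cases n) auto
  then have "real (dimN n) = 2 * real (dimN n div 2)"
    by (metis of_nat_mult of_nat_numeral)
  ultimately have "1/2 + (real (dimN n) - 1) / 2 = real (dimN n div 2)"
    and "-1/2 + (real (dimN n) - 1) / 2 = real (dimN n div 2 - 1)"
    by (simp_all add: field_simps)
  then show "spin_ket n (1/2) = ket (dimN n div 2)"
    and "spin_ket n (-1/2) = ket (dimN n div 2 - 1)"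
    unfolding spin_ket_def by (simp_all only: floor_of_nat nat_int)
qed

lemma hadamard_init_state:
  assumes "n \<ge> 1"
  shows "hadamard n (init_state n) x = (if x < dimN n
    then (walsh n x (dimN n div 2) + walsh n x (dimN n div 2 - 1))
      / (complex_of_real (sqrt 2) * complex_of_real (sqrt (real (dimN n))))
    else 0)"
proof -
  have b_less: "dimN n div 2 < dimN n"
    unfolding dimN_def using assms by simp
  then have a_less: "dimN n div 2 - 1 < dimN n"
    by linarith
  have init: "init_state n = (\<lambda>x. 1 / complex_of_real (sqrt 2) *
      (ket (dimN n div 2) x + ket (dimN n div 2 - 1) x))"
    unfolding init_state_def spin_ket_half[OF assms] ..
  show ?thesis
    unfolding init hadamard_scale_add hadamard_ket[OF a_less] hadamard_ket[OF b_less]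
    by (simp add: add_divide_distrib mult.commute)
qed

lemma hadamard_init_state_vanishes:
  assumes "n \<ge> 1" and "x \<in> codeword n (dimN n - 1)"
  shows "hadamard n (init_state n) x = 0"
proof -
  let ?a = "walsh n x (dimN n div 2 - 1)" and ?b = "walsh n x (dimN n div 2)"
  have "?a * ?b = -1"
    using assms(2) unfolding walsh_mult xor_dimN_half[OF assms(1)] codeword_def
    by (simp add: walsh_eq_if)
  then have "?b = - ?a"
    by (metis mult.assoc mult_minus1_right walsh_mult_self mult_1)
  then show ?thesis unfolding hadamard_init_state[OF assms(1)] by simp
qed

lemma hadamard_query_hadamard_init:
  assumes "n \<ge> 1" and "z \<in> Xi_tilde n j" and "j < dimN n"
  shows "hadamard n (query_op z (hadamard n (init_state n))) y = (if y < dimN n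
    then (of_bool (y = xor j (dimN n div 2)) + of_bool (y = xor j (dimN n div 2 - 1)))
      / complex_of_real (sqrt 2)
    else 0)"
proof -
  let ?a = "dimN n div 2 - 1" and ?b = "dimN n div 2"
  let ?c = "1 / (complex_of_real (sqrt 2) * complex_of_real (sqrt (real (dimN n))))"
  obtain e where z: "z = (codeword n j - e) \<union> (e - codeword n j)"
    and e: "e \<subseteq> codeword n (dimN n - 1)"
    using assms(2) unfolding Xi_tilde_def by blast
  have in_range: "xor j ?b < dimN n" "xor j ?a < dimN n"
    using assms unfolding dimN_def by (simp_all add: xor_less_two_power)
  have error_invisible:
    "query_op z (hadamard n (init_state n)) = query_op (codeword n j) (hadamard n (init_state n))"
    unfolding z using e hadamard_init_state_vanishes[OF assms(1)]
    by (intro query_op_symdiff_invisible) blast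
  have shift: "walsh n x j * walsh n x c = walsh n (xor j c) x" for x c
    by (metis walsh_mult walsh_commute)
  have query: "query_op z (hadamard n (init_state n)) x =
      ?c * (walsh n (xor j ?b) x + walsh n (xor j ?a) x)" if "x < dimN n" for x
  proof -
    have "query_op z (hadamard n (init_state n)) x = walsh n x j * hadamard n (init_state n) x"
      unfolding error_invisible query_op_codeword[OF that] ..
    also have "\<dots> = ?c * (walsh n x j * walsh n x ?b + walsh n x j * walsh n x ?a)"
      using that by (simp add: hadamard_init_state[OF assms(1)] algebra_simps add_divide_distrib)
    finally show ?thesis unfolding shift .
  qed
  have "hadamard n (query_op z (hadamard n (init_state n))) =
      hadamard n (\<lambda>x. ?c * (walsh n (xor j ?b) x + walsh n (xor j ?a) x))"
    using query by (rule hadamard_cong)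
  moreover have "sqrt (real (dimN n)) \<noteq> 0"
    unfolding dimN_def by simp
  ultimately show ?thesis
    unfolding hadamard_scale_add hadamard_walsh[OF in_range(1)]
      hadamard_walsh[OF in_range(2)]
    by (simp add: field_simps)
qed

lemma sum_cmod_sq_pair:
  assumes "finite S" and "p \<in> S" and "q \<in> S" and "p \<noteq> q"
    and "\<And>m. m \<in> S \<Longrightarrow> f m = (of_bool (m = p) + of_bool (m = q)) / complex_of_real (sqrt 2)"
  shows "(\<Sum>m\<in>S. (cmod (f m))\<^sup>2) = 1"
proof -
  have "(\<Sum>m\<in>S. (cmod (f m))\<^sup>2) = (\<Sum>m\<in>{p, q}. (cmod (f m))\<^sup>2)"
    using assms by (intro sum.mono_neutral_right) (auto simp: norm_divide)
  also have "\<dots> = 1"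
    using assms by (simp add: norm_divide power_divide)
  finally show ?thesis .
qed

lemma measure_final_state_id:
  assumes "n \<ge> 1" and "z \<in> Xi_tilde n j" and "j < dimN n" and "S \<subseteq> {..<dimN n}"
    and "xor j (dimN n div 2) \<in> S" and "xor j (dimN n div 2 - 1) \<in> S"
  shows "(\<Sum>m\<in>S. (cmod (final_state n (\<lambda>i k. of_bool (i = k)) z m))\<^sup>2) = 1"
proof (rule sum_cmod_sq_pair)
  show "finite S" using assms(4) by (rule finite_subset) simp
  have "dimN n div 2 \<ge> 1" unfolding dimN_half[OF assms(1)] by simp
  then show "xor j (dimN n div 2) \<noteq> xor j (dimN n div 2 - 1)"
    by (simp add: xor_left_cancel_nat)
  fix m assume "m \<in> S"
  with assms(4) have "m < dimN n" by blast
  then show "final_state n (\<lambda>i k. of_bool (i = k)) z m =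
    (of_bool (m = xor j (dimN n div 2)) + of_bool (m = xor j (dimN n div 2 - 1)))
      / complex_of_real (sqrt 2)"
    unfolding final_state_def mat_app_id hadamard_query_hadamard_init[OF assms(1-3)] by simp
qed (use assms(5,6) in simp_all)

lemma xor_avoids:
  assumes "xor a b = (M::nat)" and "j \<noteq> a" and "j \<noteq> b"
  shows "xor j a \<notin> {0, M}" and "xor j b \<notin> {0, M}"
  using assms by (auto simp: xor_eq_0_iff_nat) (metis xor.commute xor_left_cancel_nat)+

theorem claim1:
  fixes n :: nat
  assumes "n \<ge> 2"
  shows "\<exists>V :: nat \<Rightarrow> nat \<Rightarrow> complex. unitary_mat (dimN n) V \<and>
           (\<exists>acceptA :: nat \<Rightarrow> bool.
              \<forall>z \<in> A_tilde n \<union> B_tilde n.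
                (\<Sum>m\<in>{m. m < dimN n \<and> (acceptA m \<longleftrightarrow> z \<in> A_tilde n)}.
                    (cmod (final_state n V z m))\<^sup>2) = 1)"
proof (intro exI conjI ballI)
  let ?a = "dimN n div 2 - 1" and ?b = "dimN n div 2"
  let ?accept = "\<lambda>m. m \<in> {0, dimN n - 1}"
  have n: "n \<ge> 1" using assms by simp
  have b_ge: "?b \<ge> 2" and b_less: "?b < dimN n"
    unfolding dimN_half[OF n] using assms unfolding dimN_def
    by (simp_all add: self_le_power[of 2 "n - 1", simplified])
  fix z assume "z \<in> A_tilde n \<union> B_tilde n"
  then consider "z \<in> Xi_tilde n ?a" "z \<in> A_tilde n"
    | j where "z \<in> Xi_tilde n j" "j \<le> ?b - 2" "z \<notin> A_tilde n"
    unfolding B_tilde_def by (cases "z \<in> A_tilde n") (auto simp: A_tilde_def)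
  then show "(\<Sum>m\<in>{m. m < dimN n \<and> (?accept m \<longleftrightarrow> z \<in> A_tilde n)}.
      (cmod (final_state n (\<lambda>i k. of_bool (i = k)) z m))\<^sup>2) = 1"
  proof cases
    case 1
    have "?a < dimN n" using b_less by linarith
    with 1 b_ge b_less show ?thesis
      by (intro measure_final_state_id[OF n 1(1)]) (use xor_dimN_half[OF n] in auto)
  next
    case (2 j)
    have "j < dimN n" "j \<noteq> ?a" "j \<noteq> ?b" using 2(2) b_ge b_less by linarith+
    moreover have "xor j ?b < dimN n" "xor j ?a < dimN n"
      using \<open>j < dimN n\<close> b_less unfolding dimN_def by (simp_all add: xor_less_two_power)
    ultimately show ?thesis
      using 2(3) xor_avoids[OF xor_dimN_half[OF n]]
      by (intro measure_final_state_id[OF n 2(1)]) auto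
  qed
qed (rule unitary_mat_id)

end
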